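(* For every integer $\ell\ge 3$, every $\varepsilon>0$ and every $0<\delta<1/\ell$ there exists $C>0$ such that for every $n$-vertex graph $G$ with minimum degree $\delta(G)\ge(\delta+\varepsilon)n$, if $p\ge C/n$ then asymptotically almost surely $G\cup G(n,p)$ contains $\delta n$ pairwise vertex-disjoint copies of $C_\ell$.
   Context: Here $\delta$ is a real constant, while $\delta(G)$ denotes the minimum degree of $G$. $C_\ell$ is the cycle on $\ell$ vertices. $G(n,p)$ is the binomial random graph on $V(G)$ (each pair an edge independently with probability $p$), and $G\cup G(n,p)$ has as edge set the union of both edge sets. "Asymptotically almost surely" means with probability tending to $1$ as $n\to\infty$, for any sequence $G=G_n$ satisfying the hypotheses. *)

theory Defs
  imports Complex_Main
begin

text \<open>Graphs on vertex set {0..<n}: edge sets of 2-element subsets.\<close>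
definition all_pairs :: "nat \<Rightarrow> nat set set" where
  "all_pairs n = {{u, v} | u v. u < v \<and> v < n}"

definition degree :: "nat set set \<Rightarrow> nat \<Rightarrow> nat" where
  "degree E u = card {v. {u, v} \<in> E \<and> v \<noteq> u}"

text \<open>Minimum degree (meaningful for n > 0).\<close>
definition min_degree :: "nat \<Rightarrow> nat set set \<Rightarrow> nat" where
  "min_degree n E = Min ((\<lambda>u. degree E u) ` {..<n})"

text \<open>E (on vertices {0..<n}) contains k pairwise vertex-disjoint copies of C_l:
  copy j is the cyclic vertex sequence f j 0, ..., f j (l-1); all vertices distinct.\<close>
definition has_disjoint_cycles :: "nat \<Rightarrow> nat set set \<Rightarrow> nat \<Rightarrow> nat \<Rightarrow> bool" where
  "has_disjoint_cycles n E l k \<longleftrightarrow>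
     (\<exists>f :: nat \<Rightarrow> nat \<Rightarrow> nat.
        (\<forall>j<k. \<forall>i<l. f j i < n) \<and>
        inj_on (\<lambda>(j, i). f j i) ({..<k} \<times> {..<l}) \<and>
        (\<forall>j<k. \<forall>i<l. {f j i, f j ((i + 1) mod l)} \<in> E))"

definition gnp_prob :: "nat \<Rightarrow> real \<Rightarrow> (nat set set \<Rightarrow> bool) \<Rightarrow> real" where
  "gnp_prob n p P =
     (\<Sum>H\<in>Pow (all_pairs n). if P H then p ^ card H * (1 - p) ^ (card (all_pairs n) - card H) else 0)"

end

theory Submission
  imports Defs "HOL-Library.Disjoint_Sets"
begin

(* For p >= C/n the random graph H = G(n,p) is a.a.s. b-expanding with b about beta n: any two
   disjoint sets of b vertices are joined by an H-edge (a union bound over fewer than 4^n pairs of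
   sets). In G plus such an H, a copy of C_l through a vertex h is formed by two G-neighbours of h
   joined by an H-path through l - 1 disjoint chunks of vertices. Cycles are packed greedily: as long
   as fewer than delta n cycles are packed, at least (1 - l delta) n vertices are left over. If some
   leftover vertex has epsilon n / 2 leftover neighbours, a new cycle is built through it. Otherwise
   the minimum degree forces many edges from the leftover vertices into the packed cycles, and
   double counting yields a packed cycle with two vertices that each have many leftover neighbours;
   that cycle is traded for two new cycles through these two vertices. *)

lemma sum_binomial_weights_Pow:
  fixes p :: real
  assumes "finite T"
  shows "(\<Sum>H\<in>Pow T. p ^ card H * (1 - p) ^ (card T - card H)) = 1"
  using assms
proof (induction T rule: finite_induct)
  case empty
  then show ?case by simp
next
  case (insert x F)
  let ?w = "\<lambda>H. p ^ card H * (1 - p) ^ (card F - card H)"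
  let ?w' = "\<lambda>H. p ^ card H * (1 - p) ^ (card (insert x F) - card H)"
  have finH: "finite H" "card H \<le> card F" if "H \<in> Pow F" for H
    using that insert.hyps(1) by (auto intro: finite_subset card_mono)
  have "inj_on (insert x) (Pow F)" "Pow F \<inter> insert x ` Pow F = {}"
    using insert.hyps(2) by (auto simp: inj_on_def)
  then have "sum ?w' (Pow (insert x F)) = sum ?w' (Pow F) + sum (?w' \<circ> insert x) (Pow F)"
    unfolding Pow_insert using insert.hyps(1) by (simp add: sum.union_disjoint sum.reindex)
  also have "sum ?w' (Pow F) = (\<Sum>H\<in>Pow F. (1 - p) * ?w H)"
    using insert.hyps finH by (intro sum.cong) (auto simp: Suc_diff_le)
  also have "sum (?w' \<circ> insert x) (Pow F) = (\<Sum>H\<in>Pow F. p * ?w H)"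
    using insert.hyps finH by (intro sum.cong) (auto simp: card_insert_if subset_iff)
  finally show ?case
    by (simp only: sum_distrib_left[symmetric] insert.IH) simp
qed

lemma finite_all_pairs: "finite (all_pairs n)"
  by (rule finite_subset[of _ "Pow {..<n}"]) (auto simp: all_pairs_def)

lemma doubleton_in_all_pairs:
  assumes "x < n" "y < n" "x \<noteq> y"
  shows "{x, y} \<in> all_pairs n"
proof (cases "x < y")
  case True
  then show ?thesis using assms unfolding all_pairs_def by blast
next
  case False
  then have "{x, y} = {y, x} \<and> y < x" using assms by (auto simp: insert_commute)
  then show ?thesis using assms unfolding all_pairs_def by blast
qed

lemma gnp_prob_True: "gnp_prob n p (\<lambda>_. True) = 1"
  unfolding gnp_prob_def using sum_binomial_weights_Pow[OF finite_all_pairs] by simp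

lemma gnp_prob_not: "gnp_prob n p (\<lambda>H. \<not> P H) = 1 - gnp_prob n p P"
proof -
  have "gnp_prob n p P + gnp_prob n p (\<lambda>H. \<not> P H) = gnp_prob n p (\<lambda>_. True)"
    unfolding gnp_prob_def sum.distrib[symmetric] by (rule sum.cong) auto
  then show ?thesis using gnp_prob_True by simp
qed

lemma gnp_prob_mono:
  assumes "0 \<le> p" "p \<le> 1" "\<And>H. P H \<Longrightarrow> Q H"
  shows "gnp_prob n p P \<le> gnp_prob n p Q"
  unfolding gnp_prob_def by (rule sum_mono) (use assms in auto)

lemma gnp_prob_le_1: "0 \<le> p \<Longrightarrow> p \<le> 1 \<Longrightarrow> gnp_prob n p P \<le> 1"
  using gnp_prob_mono[of p P "\<lambda>_. True"] gnp_prob_True by simp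

lemma gnp_prob_Bex_le_sum:
  assumes "0 \<le> p" "p \<le> 1" "finite I"
  shows "gnp_prob n p (\<lambda>H. \<exists>i\<in>I. P i H) \<le> (\<Sum>i\<in>I. gnp_prob n p (P i))"
proof -
  let ?w = "\<lambda>H. p ^ card H * (1 - p) ^ (card (all_pairs n) - card H)"
  have "gnp_prob n p (\<lambda>H. \<exists>i\<in>I. P i H) \<le> (\<Sum>H\<in>Pow (all_pairs n). \<Sum>i\<in>I. if P i H then ?w H else 0)"
    unfolding gnp_prob_def
  proof (rule sum_mono)
    fix H
    show "(if \<exists>i\<in>I. P i H then ?w H else 0) \<le> (\<Sum>i\<in>I. if P i H then ?w H else 0)"
    proof (cases "\<exists>i\<in>I. P i H")
      case True
      then obtain i where i: "i \<in> I" "P i H" by blast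
      have "(if P i H then ?w H else 0) \<le> (\<Sum>i\<in>I. if P i H then ?w H else 0)"
        by (rule member_le_sum) (use assms i in auto)
      then show ?thesis using True i by simp
    qed simp
  qed
  also have "\<dots> = (\<Sum>i\<in>I. gnp_prob n p (P i))"
    unfolding gnp_prob_def by (rule sum.swap)
  finally show ?thesis .
qed

lemma gnp_prob_disjoint:
  assumes "S \<subseteq> all_pairs n"
  shows "gnp_prob n p (\<lambda>H. H \<inter> S = {}) = (1 - p) ^ card S"
proof -
  let ?A = "all_pairs n"
  have finS: "finite S" using assms finite_all_pairs by (rule finite_subset)
  have "gnp_prob n p (\<lambda>H. H \<inter> S = {})
      = (\<Sum>H\<in>Pow (?A - S). p ^ card H * (1 - p) ^ (card ?A - card H))"
    unfolding gnp_prob_def using finite_all_pairs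
    by (simp add: sum.inter_filter[symmetric] Int_Diff_disjoint[symmetric]) (intro sum.cong; blast)
  also have "\<dots> = (\<Sum>H\<in>Pow (?A - S). (1 - p) ^ card S * (p ^ card H * (1 - p) ^ (card (?A - S) - card H)))"
  proof (rule sum.cong)
    fix H assume "H \<in> Pow (?A - S)"
    then have "card H \<le> card (?A - S)" using finite_all_pairs by (simp add: card_mono)
    moreover have "card (?A - S) + card S = card ?A"
      using assms finS finite_all_pairs by (simp add: card_Diff_subset card_mono)
    ultimately have "card ?A - card H = card S + (card (?A - S) - card H)" by simp
    then show "p ^ card H * (1 - p) ^ (card ?A - card H) =
        (1 - p) ^ card S * (p ^ card H * (1 - p) ^ (card (?A - S) - card H))"
      by (simp add: power_add)
  qed simp
  also have "\<dots> = (1 - p) ^ card S"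
    using sum_binomial_weights_Pow[of "?A - S" p] finite_all_pairs
    by (simp add: sum_distrib_left[symmetric])
  finally show ?thesis .
qed

definition expanding :: "nat \<Rightarrow> nat set set \<Rightarrow> nat \<Rightarrow> bool" where
  "expanding n H b \<longleftrightarrow> (\<forall>X Y. X \<subseteq> {..<n} \<longrightarrow> Y \<subseteq> {..<n} \<longrightarrow> X \<inter> Y = {} \<longrightarrow>
      b \<le> card X \<longrightarrow> b \<le> card Y \<longrightarrow> (\<exists>x\<in>X. \<exists>y\<in>Y. {x, y} \<in> H))"

lemma gnp_prob_not_expanding_le:
  assumes p: "0 \<le> p" "p \<le> 1"
  shows "gnp_prob n p (\<lambda>H. \<not> expanding n H b) \<le> 4 ^ n * (1 - p) ^ (b * b)"
proof -
  define cross where "cross X Y = (\<lambda>(x, y). {x, y}) ` (X \<times> Y)" for X Y :: "nat set"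
  define I where "I = {(X, Y) \<in> Pow {..<n} \<times> Pow {..<n}. X \<inter> Y = {} \<and> card X = b \<and> card Y = b}"
  have I_sub: "I \<subseteq> Pow {..<n} \<times> Pow {..<n}" unfolding I_def by blast
  then have finI: "finite I" by (rule finite_subset) simp
  have "gnp_prob n p (\<lambda>H. \<not> expanding n H b) \<le> gnp_prob n p (\<lambda>H. \<exists>XY\<in>I. H \<inter> case_prod cross XY = {})"
  proof (rule gnp_prob_mono[OF p])
    fix H assume "\<not> expanding n H b"
    then obtain X Y where XY: "X \<subseteq> {..<n}" "Y \<subseteq> {..<n}" "X \<inter> Y = {}" "b \<le> card X" "b \<le> card Y"
      and no_edge: "\<forall>x\<in>X. \<forall>y\<in>Y. {x, y} \<notin> H"
      unfolding expanding_def by blast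
    obtain X' Y' where X'Y': "X' \<subseteq> X" "card X' = b" "Y' \<subseteq> Y" "card Y' = b"
      using obtain_subset_with_card_n XY(4,5) by metis
    then have "(X', Y') \<in> I" using XY unfolding I_def by blast
    moreover have "H \<inter> cross X' Y' = {}" using no_edge X'Y' unfolding cross_def by fastforce
    ultimately show "\<exists>XY\<in>I. H \<inter> case_prod cross XY = {}" by auto
  qed
  also have "\<dots> \<le> (\<Sum>XY\<in>I. gnp_prob n p (\<lambda>H. H \<inter> case_prod cross XY = {}))"
    by (rule gnp_prob_Bex_le_sum[OF p finI])
  also have "\<dots> = (\<Sum>XY\<in>I. (1 - p) ^ (b * b))"
  proof (rule sum.cong)
    fix XY assume "XY \<in> I"
    then obtain X Y where XY_eq: "XY = (X, Y)"
      and XY: "X \<subseteq> {..<n}" "Y \<subseteq> {..<n}" "X \<inter> Y = {}" "card X = b" "card Y = b"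
      unfolding I_def by auto
    have "inj_on (\<lambda>(x, y). {x, y}) (X \<times> Y)"
      using XY(3) by (auto simp: inj_on_def doubleton_eq_iff)
    then have "card (cross X Y) = b * b"
      using XY by (simp add: cross_def card_image card_cartesian_product)
    moreover have "cross X Y \<subseteq> all_pairs n"
      using XY by (auto simp: cross_def intro!: doubleton_in_all_pairs)
    ultimately show "gnp_prob n p (\<lambda>H. H \<inter> case_prod cross XY = {}) = (1 - p) ^ (b * b)"
      by (simp add: XY_eq gnp_prob_disjoint)
  qed simp
  also have "\<dots> \<le> real (card (Pow {..<n} \<times> Pow {..<n})) * (1 - p) ^ (b * b)"
    unfolding sum_constant using card_mono[OF _ I_sub] p
    by (intro mult_right_mono) (simp_all del: of_nat_mult)
  also have "\<dots> = 4 ^ n * (1 - p) ^ (b * b)"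
    by (simp add: card_cartesian_product card_Pow power_mult_distrib[symmetric])
  finally show ?thesis .
qed

lemma gnp_prob_expanding_ge:
  assumes p: "0 \<le> p" "p \<le> 1" and many_edges: "4 * real n \<le> p * real (b * b)"
  shows "1 - (4 * exp (-4)) ^ n \<le> gnp_prob n p (\<lambda>H. expanding n H b)"
proof -
  have "(1 - p) ^ (b * b) \<le> exp (-p) ^ (b * b)"
    using p exp_ge_add_one_self[of "-p"] by (intro power_mono) auto
  also have "\<dots> = exp (- (p * real (b * b)))"
    by (simp add: exp_of_nat_mult[symmetric] mult.commute)
  also have "\<dots> \<le> exp (-4) ^ n"
    using many_edges by (simp add: exp_of_nat_mult[symmetric] mult.commute)
  finally have "4 ^ n * (1 - p) ^ (b * b) \<le> (4 * exp (-4)) ^ n"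
    by (simp add: power_mult_distrib)
  then show ?thesis
    using gnp_prob_not_expanding_le[OF p, of n b] gnp_prob_not[of n p "\<lambda>H. expanding n H b"]
    by linarith
qed

lemma LIMSEQ_1_minus_power_4_exp: "(\<lambda>n. 1 - (4 * exp (-4::real)) ^ n) \<longlonglongrightarrow> 1"
proof -
  have "5 \<le> exp (4::real)" using exp_ge_add_one_self[of 4] by simp
  then have "4 * exp (-4::real) < 1" by (simp add: exp_minus field_simps)
  then have "(\<lambda>n. (4 * exp (-4::real)) ^ n) \<longlonglongrightarrow> 0" by (intro LIMSEQ_realpow_zero) auto
  then show ?thesis using tendsto_diff[OF tendsto_const[of 1]] by fastforce
qed

definition neighbours :: "nat set set \<Rightarrow> nat \<Rightarrow> nat set" where
  "neighbours E u = {v. {u, v} \<in> E \<and> v \<noteq> u}"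

lemma neighbours_sym: "v \<in> neighbours E u \<longleftrightarrow> u \<in> neighbours E v"
  by (auto simp: neighbours_def insert_commute)

lemma sum_card_neighbours_Int_swap:
  assumes "finite A" "finite B"
  shows "(\<Sum>a\<in>A. card (neighbours E a \<inter> B)) = (\<Sum>v\<in>B. card (neighbours E v \<inter> A))"
proof -
  have direct: "card (neighbours E u \<inter> S) = (\<Sum>w\<in>S. if w \<in> neighbours E u then 1 else 0)"
    and flipped: "card (neighbours E u \<inter> S) = (\<Sum>w\<in>S. if u \<in> neighbours E w then 1 else 0)"
    if "finite S" for u S
    using that by (simp_all add: sum.If_cases Int_commute neighbours_sym[of u])
  show ?thesis
    unfolding flipped[OF assms(2)] direct[OF assms(1)] by (rule sum.swap)
qed

lemma neighbours_subset: "E \<subseteq> all_pairs n \<Longrightarrow> neighbours E a \<subseteq> {..<n}"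
  unfolding neighbours_def all_pairs_def by (fastforce simp: doubleton_eq_iff)

lemma min_degree_le_card_neighbours: "a < n \<Longrightarrow> min_degree n E \<le> card (neighbours E a)"
  unfolding min_degree_def degree_def neighbours_def[symmetric] by (intro Min_le) auto

lemma disjoint_subsets_with_card:
  assumes "finite I" "finite A" "card I * s \<le> card A"
  shows "\<exists>X. (\<forall>i\<in>I. X i \<subseteq> A \<and> card (X i) = s) \<and> disjoint_family_on X I"
  using assms
proof (induction I arbitrary: A rule: finite_induct)
  case empty
  then show ?case by (simp add: disjoint_family_on_def)
next
  case (insert i I)
  then have "s \<le> card A" by simp
  then obtain B where B: "B \<subseteq> A" "card B = s" by (metis obtain_subset_with_card_n)
  then have "card I * s \<le> card (A - B)"
    using insert by (simp add: card_Diff_subset finite_subset)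
  then obtain X where X: "\<forall>j\<in>I. X j \<subseteq> A - B \<and> card (X j) = s" "disjoint_family_on X I"
    using insert.IH[of "A - B"] insert.prems by auto
  have "disjoint_family_on (X(i := B)) (insert i I)"
    using X insert.hyps(2) by (auto simp: disjoint_family_on_insert disjoint_family_on_def)
  moreover have "\<forall>j\<in>insert i I. (X(i := B)) j \<subseteq> A \<and> card ((X(i := B)) j) = s"
    using X B by auto
  ultimately show ?case by blast
qed

lemma expanding_few_without_neighbour:
  assumes H: "expanding n H b" and X: "X \<subseteq> {..<n}" "b \<le> card X" and Y: "Y \<subseteq> {..<n}" "X \<inter> Y = {}"
  shows "card {y \<in> Y. \<forall>x\<in>X. {x, y} \<notin> H} < b"
proof (rule ccontr)
  let ?Y' = "{y \<in> Y. \<forall>x\<in>X. {x, y} \<notin> H}"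
  assume "\<not> card ?Y' < b"
  moreover have "?Y' \<subseteq> {..<n}" "X \<inter> ?Y' = {}" using Y by auto
  ultimately have "\<exists>x\<in>X. \<exists>y\<in>?Y'. {x, y} \<in> H"
    using H X unfolding expanding_def by (meson not_le)
  then show False by auto
qed

lemma expanding_path:
  assumes H: "expanding n H b" and b: "1 \<le> b"
  shows "\<forall>i\<le>k. X i \<subseteq> {..<n} \<and> Suc k * b \<le> card (X i) \<Longrightarrow> disjoint_family_on X {..k} \<Longrightarrow>
    \<exists>x. (\<forall>i\<le>k. x i \<in> X i) \<and> (\<forall>i<k. {x i, x (Suc i)} \<in> H)"
proof (induction k arbitrary: X)
  case 0
  then have "X 0 \<noteq> {}" using b by auto
  then show ?case by auto
next
  case (Suc k)
  \<comment> \<open>Fewer than b vertices of X 1 have no H-neighbour in X 0, so the others can replace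
    X 0 and X 1 in a shorter chain.\<close>
  define Y0 where "Y0 = {y \<in> X 1. \<exists>x\<in>X 0. {x, y} \<in> H}"
  have X01: "X 0 \<subseteq> {..<n}" "X 1 \<subseteq> {..<n}" "X 0 \<inter> X 1 = {}"
    "b \<le> card (X 0)" "Suc (Suc k) * b \<le> card (X 1)"
    using Suc.prems by (auto simp: disjoint_family_on_def)
  have "Y0 \<union> {y \<in> X 1. \<forall>x\<in>X 0. {x, y} \<notin> H} = X 1" by (auto simp: Y0_def)
  then have "card (X 1) \<le> card Y0 + card {y \<in> X 1. \<forall>x\<in>X 0. {x, y} \<notin> H}"
    using card_Un_le[of Y0 "{y \<in> X 1. \<forall>x\<in>X 0. {x, y} \<notin> H}"] by simp
  then have "Suc k * b \<le> card Y0"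
    using expanding_few_without_neighbour[OF H X01(1,4,2,3)] X01(5) by simp
  define Y where "Y = (X \<circ> Suc)(0 := Y0)"
  have Y_sub: "Y i \<subseteq> X (Suc i)" for i by (auto simp: Y_def Y0_def)
  have "Y i \<subseteq> {..<n} \<and> Suc k * b \<le> card (Y i)" if "i \<le> k" for i
  proof (cases "i = 0")
    case False
    then have "Y i = X (Suc i)" by (simp add: Y_def)
    moreover have "X (Suc i) \<subseteq> {..<n} \<and> Suc (Suc k) * b \<le> card (X (Suc i))"
      using Suc.prems(1) that by simp
    ultimately show ?thesis by auto
  qed (use X01(2) Y_sub[of 0] \<open>Suc k * b \<le> card Y0\<close> in \<open>auto simp: Y_def\<close>)
  moreover have "disjoint_family_on Y {..k}"
    unfolding disjoint_family_on_def
  proof (intro ballI impI)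
    fix i j assume "i \<in> {..k}" "j \<in> {..k}" "i \<noteq> j"
    then have "X (Suc i) \<inter> X (Suc j) = {}" using Suc.prems(2) by (simp add: disjoint_family_onD)
    then show "Y i \<inter> Y j = {}" using Y_sub by blast
  qed
  ultimately obtain y where y: "\<forall>i\<le>k. y i \<in> Y i" "\<forall>i<k. {y i, y (Suc i)} \<in> H"
    using Suc.IH by blast
  then obtain x0 where x0: "x0 \<in> X 0" "{x0, y 0} \<in> H"
    using y(1)[rule_format, of 0] by (auto simp: Y_def Y0_def)
  have "\<forall>i\<le>Suc k. case_nat x0 y i \<in> X i"
    using x0 y(1) Y_sub by (auto split: nat.split)
  moreover have "\<forall>i<Suc k. {case_nat x0 y i, case_nat x0 y (Suc i)} \<in> H"
    using x0 y(2) by (auto split: nat.split)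
  ultimately show ?case by blast
qed

lemma disjoint_chunks_with_ends:
  assumes W: "finite W" "A \<subseteq> W" and "1 \<le> k" and A: "2 * s \<le> card A" and room: "Suc k * s \<le> card W"
  shows "\<exists>X. (\<forall>i\<le>k. X i \<subseteq> W \<and> card (X i) = s) \<and> X 0 \<subseteq> A \<and> X k \<subseteq> A \<and> disjoint_family_on X {..k}"
proof -
  define ends where "ends = {0, k}"
  define mids where "mids = {1..<k}"
  have card_ends: "card ends = 2" using \<open>1 \<le> k\<close> by (simp add: ends_def)
  then obtain E where E: "\<forall>i\<in>ends. E i \<subseteq> A \<and> card (E i) = s" "disjoint_family_on E ends"
    using disjoint_subsets_with_card[of ends A s] W A finite_subset by (auto simp: ends_def)
  define W' where "W' = W - (\<Union>i\<in>ends. E i)"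
  have "card (\<Union>i\<in>ends. E i) = (\<Sum>i\<in>ends. card (E i))"
    using E W by (intro card_UN_disjoint) (auto simp: ends_def disjoint_family_on_def intro: finite_subset)
  also have "\<dots> = 2 * s" using E card_ends by simp
  moreover have "(\<Union>i\<in>ends. E i) \<subseteq> W" using E W(2) by blast
  ultimately have "card W' = card W - 2 * s"
    unfolding W'_def using W(1) by (simp add: card_Diff_subset finite_subset)
  then have "card mids * s \<le> card W'"
    using room \<open>1 \<le> k\<close> by (simp add: mids_def algebra_simps diff_mult_distrib)
  then obtain M where M: "\<forall>i\<in>mids. M i \<subseteq> W' \<and> card (M i) = s" "disjoint_family_on M mids"
    using disjoint_subsets_with_card[of mids W' s] W(1) by (auto simp: mids_def W'_def)
  define X where "X i = (if i \<in> ends then E i else M i)" for i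
  have ends_mids: "{..k} = ends \<union> mids" using \<open>1 \<le> k\<close> by (auto simp: ends_def mids_def)
  have "X i \<subseteq> W \<and> card (X i) = s" if "i \<le> k" for i
  proof (cases "i \<in> ends")
    case True
    then show ?thesis using E(1) W(2) by (auto simp: X_def)
  next
    case False
    then have "i \<in> mids" using that ends_mids by auto
    then show ?thesis using False M(1) by (auto simp: X_def W'_def)
  qed
  moreover have "disjoint_family_on X {..k}"
    unfolding disjoint_family_on_def
  proof (intro ballI impI)
    fix i j assume ij: "i \<in> {..k}" "j \<in> {..k}" "i \<noteq> j"
    then have "i \<in> ends \<union> mids" "j \<in> ends \<union> mids" using ends_mids by auto
    then show "X i \<inter> X j = {}"
      using ij(3) E M unfolding X_def W'_def disjoint_family_on_def by (auto; blast)
  qed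
  moreover have "X 0 \<subseteq> A" "X k \<subseteq> A" using E by (simp_all add: X_def ends_def)
  ultimately show ?thesis by blast
qed

lemma cycle_from_path:
  assumes x: "inj_on x {..k}" "h \<notin> x ` {..k}"
    and ends: "{h, x 0} \<in> E" "{h, x k} \<in> E" and path: "\<forall>i<k. {x i, x (Suc i)} \<in> E"
  shows "inj_on (case_nat h x) {..<Suc (Suc k)} \<and>
    (\<forall>i<Suc (Suc k). {case_nat h x i, case_nat h x ((i + 1) mod Suc (Suc k))} \<in> E)"
proof
  have "inj_on (case_nat h x) (Suc ` {..k})" using x(1) by (auto simp: inj_on_def)
  moreover have "h \<notin> case_nat h x ` (Suc ` {..k})" using x(2) by (auto simp: image_image)
  ultimately show "inj_on (case_nat h x) {..<Suc (Suc k)}"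
    by (simp only: lessThan_Suc_atMost atMost_Suc_eq_insert_0 inj_on_insert) auto
  have "{case_nat h x i, case_nat h x ((i + 1) mod Suc (Suc k))} \<in> E" if i: "i < Suc (Suc k)" for i
  proof -
    consider "i = 0" | "i = Suc k" | j where "i = Suc j" "j < k"
      using i by (cases i) (auto simp: less_Suc_eq)
    then show ?thesis
    proof cases
      case 1
      then show ?thesis using ends(1) by simp
    next
      case 2
      then show ?thesis using ends(2) by (simp add: insert_commute)
    next
      case 3
      then have "(i + 1) mod Suc (Suc k) = Suc (Suc j)" by simp
      then show ?thesis using path 3 by simp
    qed
  qed
  then show "\<forall>i<Suc (Suc k). {case_nat h x i, case_nat h x ((i + 1) mod Suc (Suc k))} \<in> E" by blast
qed

lemma expanding_cycle_through:
  assumes l: "3 \<le> l" and H: "expanding n H b" "1 \<le> b"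
    and W: "W \<subseteq> {..<n}" "h \<notin> W"
    and nbrs: "2 * (l - 1) * b \<le> card (neighbours G h \<inter> W)"
    and room: "(l - 1) * (l - 1) * b \<le> card W"
  shows "\<exists>c. c 0 = h \<and> c ` {1..<l} \<subseteq> W \<and> inj_on c {..<l} \<and>
    (\<forall>i<l. {c i, c ((i + 1) mod l)} \<in> G \<union> H)"
proof -
  define k where "k = l - 2"
  have k: "1 \<le> k" "l = Suc (Suc k)" using l by (auto simp: k_def)
  have "finite W" using W(1) finite_subset by blast
  have lk: "l - 1 = Suc k" using k(2) by simp
  have nbrs': "2 * (Suc k * b) \<le> card (neighbours G h \<inter> W)" using nbrs unfolding lk by (simp only: mult.assoc)
  have room': "Suc k * (Suc k * b) \<le> card W" using room unfolding lk by (simp only: mult.assoc)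
  obtain X where X: "\<forall>i\<le>k. X i \<subseteq> W \<and> card (X i) = Suc k * b"
    "X 0 \<subseteq> neighbours G h \<inter> W" "X k \<subseteq> neighbours G h \<inter> W" "disjoint_family_on X {..k}"
    using disjoint_chunks_with_ends[OF \<open>finite W\<close> Int_lower2 k(1) nbrs' room'] by blast
  have "\<forall>i\<le>k. X i \<subseteq> {..<n} \<and> Suc k * b \<le> card (X i)"
    using X(1) W(1) by auto
  then obtain x where x: "\<forall>i\<le>k. x i \<in> X i" "\<forall>i<k. {x i, x (Suc i)} \<in> H"
    using expanding_path[OF H _ X(4)] by blast
  have x_inj: "inj_on x {..k}"
  proof (rule inj_onI)
    fix i j assume ij: "i \<in> {..k}" "j \<in> {..k}" "x i = x j"
    then have "x i \<in> X i \<inter> X j" using x(1) by auto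
    then show "i = j" using ij X(4) unfolding disjoint_family_on_def by blast
  qed
  have x_W: "x ` {..k} \<subseteq> W" using x(1) X(1) by blast
  then have "h \<notin> x ` {..k}" using W(2) by blast
  moreover have "{h, x 0} \<in> G \<union> H" "{h, x k} \<in> G \<union> H"
    using x(1) X(2,3) by (auto simp: neighbours_def)
  moreover have "\<forall>i<k. {x i, x (Suc i)} \<in> G \<union> H" using x(2) by blast
  ultimately have "inj_on (case_nat h x) {..<l} \<and>
    (\<forall>i<l. {case_nat h x i, case_nat h x ((i + 1) mod l)} \<in> G \<union> H)"
    unfolding k(2) by (rule cycle_from_path[OF x_inj])
  moreover have "case_nat h x ` {1..<l} \<subseteq> W"
  proof (rule image_subsetI)
    fix i assume "i \<in> {1..<l}"
    then obtain j where "i = Suc j" "j \<le> k" using k(2) by (cases i) auto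
    then show "case_nat h x i \<in> W" using x_W by auto
  qed
  ultimately show ?thesis by (intro exI[of _ "case_nat h x"]) simp
qed

lemma image_lessThan_eq_insert:
  assumes "0 < (l :: nat)" shows "c ` {..<l} = insert (c 0) (c ` {1..<l})"
proof -
  have "{..<l} = insert 0 {1..<l}" using assms by auto
  then show ?thesis by (simp only: image_insert)
qed

lemma sum_le_if_at_most_one_large:
  fixes g :: "'a \<Rightarrow> real"
  assumes "finite I" and g: "\<forall>i\<in>I. 0 \<le> g i \<and> g i \<le> A" and "0 \<le> A" "0 \<le> B"
    and one_large: "\<forall>i\<in>I. \<forall>j\<in>I. B \<le> g i \<and> B \<le> g j \<longrightarrow> i = j"
  shows "sum g I \<le> A + real (card I) * B"
proof (cases "\<exists>i0\<in>I. B \<le> g i0")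
  case True
  then obtain i0 where i0: "i0 \<in> I" "B \<le> g i0" by blast
  have "sum g I = g i0 + sum g (I - {i0})"
    using i0 \<open>finite I\<close> by (simp add: sum.remove)
  also have "sum g (I - {i0}) \<le> real (card (I - {i0})) * B"
    using one_large i0 by (intro sum_bounded_above) (metis DiffE insertCI not_le order.strict_implies_order)
  also have "\<dots> \<le> real (card I) * B"
    using \<open>finite I\<close> \<open>0 \<le> B\<close> by (intro mult_right_mono) (auto intro: card_mono)
  finally have "sum g I \<le> g i0 + real (card I) * B" by simp
  moreover have "g i0 \<le> A" using g i0(1) by blast
  ultimately show ?thesis by simp
next
  case False
  then have "sum g I \<le> real (card I) * B"
    by (intro sum_bounded_above) (simp add: not_le less_imp_le)
  then show ?thesis using \<open>0 \<le> A\<close> by simp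
qed

lemma card_Int_le_Diff_add:
  assumes "finite A"
  shows "card (B \<inter> A) \<le> card (B \<inter> (A - C)) + card (C \<inter> A)"
proof -
  have "B \<inter> A \<subseteq> (B \<inter> (A - C)) \<union> (C \<inter> A)" by blast
  then have "card (B \<inter> A) \<le> card ((B \<inter> (A - C)) \<union> (C \<inter> A))"
    using assms by (intro card_mono) auto
  also have "\<dots> \<le> card (B \<inter> (A - C)) + card (C \<inter> A)" by (rule card_Un_le)
  finally show ?thesis .
qed

definition cycle_packing :: "nat \<Rightarrow> nat set set \<Rightarrow> nat \<Rightarrow> nat \<Rightarrow> (nat \<Rightarrow> nat \<Rightarrow> nat) \<Rightarrow> bool" where
  "cycle_packing n E l k f \<longleftrightarrow>
     (\<forall>j<k. \<forall>i<l. f j i < n) \<and>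
     inj_on (\<lambda>(j, i). f j i) ({..<k} \<times> {..<l}) \<and>
     (\<forall>j<k. \<forall>i<l. {f j i, f j ((i + 1) mod l)} \<in> E)"

lemma has_disjoint_cycles_iff_cycle_packing: "has_disjoint_cycles n E l k \<longleftrightarrow> (\<exists>f. cycle_packing n E l k f)"
  unfolding has_disjoint_cycles_def cycle_packing_def by simp

lemma cycle_packing_0: "cycle_packing n E l 0 f"
  by (simp add: cycle_packing_def)

lemma cycle_packing_injD:
  "cycle_packing n E l k f \<Longrightarrow> j < k \<Longrightarrow> i < l \<Longrightarrow> j' < k \<Longrightarrow> i' < l \<Longrightarrow> f j i = f j' i' \<Longrightarrow>
    j = j' \<and> i = i'"
  unfolding cycle_packing_def by (auto dest: inj_onD[of _ _ "(j, i)" "(j', i')"])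

lemma sum_cycle_packing_vertices:
  assumes "cycle_packing n E l k f"
  shows "(\<Sum>u\<in>(\<Union>j<k. f j ` {..<l}). g u) = (\<Sum>j<k. \<Sum>i<l. g (f j i))"
proof -
  have "(\<Union>j<k. f j ` {..<l}) = (\<lambda>(j, i). f j i) ` ({..<k} \<times> {..<l})" by auto
  moreover have "inj_on (\<lambda>(j, i). f j i) ({..<k} \<times> {..<l})"
    using assms by (simp add: cycle_packing_def)
  ultimately have "(\<Sum>u\<in>(\<Union>j<k. f j ` {..<l}). g u) = (\<Sum>(j, i)\<in>{..<k} \<times> {..<l}. g (f j i))"
    by (simp add: sum.reindex case_prod_unfold)
  then show ?thesis by (simp add: sum.cartesian_product)
qed

lemma card_cycle_packing_vertices:
  "cycle_packing n E l k f \<Longrightarrow> card (\<Union>j<k. f j ` {..<l}) = k * l"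
  using sum_cycle_packing_vertices[of n E l k f "\<lambda>_. 1 :: nat"] by simp

text \<open>For j < k this replaces cycle j of the packing; for j = k it appends c as a new cycle.\<close>
lemma cycle_packing_update:
  assumes f: "cycle_packing n E l k f" and "j \<le> k"
    and c: "c ` {..<l} \<subseteq> {..<n}" "inj_on c {..<l}" "\<forall>i<l. {c i, c ((i + 1) mod l)} \<in> E"
    and disj: "\<forall>j'<k. j' \<noteq> j \<longrightarrow> c ` {..<l} \<inter> f j' ` {..<l} = {}"
  shows "cycle_packing n E l (max k (Suc j)) (f(j := c))"
proof -
  have other: "j' < k" if "j' < max k (Suc j)" "j' \<noteq> j" for j'
    using that \<open>j \<le> k\<close> by auto
  have "inj_on (\<lambda>(j', i). (f(j := c)) j' i) ({..<max k (Suc j)} \<times> {..<l})"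
  proof (rule inj_onI, clarify)
    fix j1 i1 j2 i2
    assume a: "j1 < max k (Suc j)" "i1 < l" "j2 < max k (Suc j)" "i2 < l"
      and eq: "(f(j := c)) j1 i1 = (f(j := c)) j2 i2"
    show "j1 = j2 \<and> i1 = i2"
    proof (cases "j1 = j"; cases "j2 = j")
      assume "j1 = j" "j2 = j"
      then show ?thesis using eq a c(2) by (auto dest: inj_onD)
    next
      assume "j1 = j" "j2 \<noteq> j"
      then have "c i1 = f j2 i2" "j2 < k" using eq a(3) other[of j2] by auto
      then show ?thesis using disj a \<open>j2 \<noteq> j\<close> by blast
    next
      assume "j1 \<noteq> j" "j2 = j"
      then have "c i2 = f j1 i1" "j1 < k" using eq a(1) other[of j1] by auto
      then show ?thesis using disj a \<open>j1 \<noteq> j\<close> by blast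
    next
      assume "j1 \<noteq> j" "j2 \<noteq> j"
      then have "f j1 i1 = f j2 i2" "j1 < k" "j2 < k" using eq a(1,3) other by auto
      then show ?thesis using cycle_packing_injD[OF f] a(2,4) by blast
    qed
  qed
  moreover have "\<forall>j'<max k (Suc j). \<forall>i<l. (f(j := c)) j' i < n"
    using f c(1) other unfolding cycle_packing_def by (auto simp: image_subset_iff)
  moreover have "\<forall>j'<max k (Suc j). \<forall>i<l. {(f(j := c)) j' i, (f(j := c)) j' ((i + 1) mod l)} \<in> E"
    using f c(3) other unfolding cycle_packing_def by auto
  ultimately show ?thesis unfolding cycle_packing_def by blast
qed

definition room_for_cycles :: "nat \<Rightarrow> real \<Rightarrow> real \<Rightarrow> nat \<Rightarrow> nat \<Rightarrow> bool" where
  "room_for_cycles l \<delta> \<epsilon> n b \<longleftrightarrow>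
     real (2 * (l - 1) * b + l) \<le> \<epsilon> / 2 * real n \<and>
     real (2 * (l - 1) * b + l) \<le> \<epsilon> / (2 * \<delta> * real l) * (1 - real l * \<delta>) * real n \<and>
     real ((l - 1) * (l - 1) * b + l) \<le> (1 - real l * \<delta>) * real n"

text \<open>b is the expansion threshold of the random graph. The room assumption leaves space for two
  chunks of (l - 1) b neighbours and for l - 1 such chunks of leftover vertices, with l vertices to
  spare for a second new cycle.\<close>
locale dense_graph =
  fixes n :: nat and G :: "nat set set" and l b :: nat and \<delta> \<epsilon> :: real
  assumes l_ge_3: "3 \<le> l" and \<delta>_pos: "0 < \<delta>" and \<epsilon>_pos: "0 < \<epsilon>" and l_\<delta>: "real l * \<delta> < 1"
    and G_pairs: "G \<subseteq> all_pairs n"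
    and degree_G: "\<forall>a<n. (\<delta> + \<epsilon>) * real n \<le> real (card (neighbours G a))"
    and b_pos: "1 \<le> b" and room: "room_for_cycles l \<delta> \<epsilon> n b"
begin

lemma room_nbrs: "real (2 * (l - 1) * b + l) \<le> \<epsilon> / 2 * real n"
  and room_rich: "real (2 * (l - 1) * b + l) \<le> \<epsilon> / (2 * \<delta> * real l) * (1 - real l * \<delta>) * real n"
  and room_leftover: "real ((l - 1) * (l - 1) * b + l) \<le> (1 - real l * \<delta>) * real n"
  using room unfolding room_for_cycles_def by auto

definition leftover :: "nat \<Rightarrow> (nat \<Rightarrow> nat \<Rightarrow> nat) \<Rightarrow> nat set" where
  "leftover k f = {..<n} - (\<Union>j<k. f j ` {..<l})"

lemma leftover_subset: "leftover k f \<subseteq> {..<n}"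
  by (auto simp: leftover_def)

lemma leftover_disjoint: "j < k \<Longrightarrow> leftover k f \<inter> f j ` {..<l} = {}"
  by (auto simp: leftover_def)

lemma card_leftover_gt:
  assumes f: "cycle_packing n E l k f" and k: "real k < \<delta> * real n"
  shows "(1 - real l * \<delta>) * real n < real (card (leftover k f))"
proof -
  have "(\<Union>j<k. f j ` {..<l}) \<subseteq> {..<n}" using f by (auto simp: cycle_packing_def)
  then have "card (leftover k f) = n - k * l"
    unfolding leftover_def using card_cycle_packing_vertices[OF f]
    by (metis card_Diff_subset card_lessThan finite_lessThan rev_finite_subset)
  moreover have kl: "real k * real l < real l * \<delta> * real n" using k l_ge_3 by (simp add: mult.commute)
  moreover have "real l * \<delta> * real n \<le> real n" using l_\<delta> \<delta>_pos by (intro mult_left_le_one_le) auto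
  ultimately have "real (k * l) \<le> real n" by simp
  then have "k * l \<le> n" by (simp only: of_nat_le_iff)
  then have "real (card (leftover k f)) = real n - real k * real l"
    using \<open>card (leftover k f) = n - k * l\<close> by (simp add: of_nat_diff)
  moreover have "(1 - real l * \<delta>) * real n = real n - real l * \<delta> * real n"
    by (simp add: algebra_simps)
  ultimately show ?thesis using kl by linarith
qed

lemma leftover_large:
  assumes "cycle_packing n E l k f" "real k < \<delta> * real n"
  shows "(l - 1) * (l - 1) * b + l < card (leftover k f)"
proof -
  have "real ((l - 1) * (l - 1) * b + l) < real (card (leftover k f))"
    using card_leftover_gt[OF assms] room_leftover by linarith
  then show ?thesis by (simp only: of_nat_less_iff)
qed

lemma cycle_packing_append:
  assumes f: "cycle_packing n E l k f"
    and c: "c ` {..<l} \<subseteq> leftover k f" "inj_on c {..<l}" "\<forall>i<l. {c i, c ((i + 1) mod l)} \<in> E"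
  shows "cycle_packing n E l (Suc k) (f(k := c))"
proof -
  have "c ` {..<l} \<subseteq> {..<n}" using c(1) leftover_subset by blast
  moreover have "\<forall>j'<k. j' \<noteq> k \<longrightarrow> c ` {..<l} \<inter> f j' ` {..<l} = {}"
    using c(1) leftover_disjoint[of _ k f] by blast
  ultimately show ?thesis using cycle_packing_update[OF f order_refl _ c(2,3)] by simp
qed

lemma cycle_packing_replace:
  assumes f: "cycle_packing n E l k f" and j: "j < k" "i < l"
    and c: "c 0 = f j i" "c ` {1..<l} \<subseteq> leftover k f" "inj_on c {..<l}"
      "\<forall>i<l. {c i, c ((i + 1) mod l)} \<in> E"
  shows "cycle_packing n E l k (f(j := c))"
proof -
  have c_image: "c ` {..<l} = insert (f j i) (c ` {1..<l})"
    using image_lessThan_eq_insert[of l c] c(1) l_ge_3 by simp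
  have "f j i < n" using f j by (simp add: cycle_packing_def)
  then have "c ` {..<l} \<subseteq> {..<n}" using c_image c(2) leftover_subset[of k f] by auto
  moreover have "c ` {..<l} \<inter> f j' ` {..<l} = {}" if j': "j' < k" "j' \<noteq> j" for j'
  proof -
    have "f j i \<notin> f j' ` {..<l}"
    proof
      assume "f j i \<in> f j' ` {..<l}"
      then obtain i' where "i' < l" "f j i = f j' i'" by auto
      then show False using cycle_packing_injD[OF f j j'(1)] j'(2) by blast
    qed
    moreover have "c ` {1..<l} \<inter> f j' ` {..<l} = {}" using c(2) leftover_disjoint[OF j'(1)] by blast
    ultimately show ?thesis using c_image by simp
  qed
  ultimately have "cycle_packing n E l (max k (Suc j)) (f(j := c))"
    using cycle_packing_update[OF f less_imp_le[OF j(1)] _ c(3,4)] by blast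
  moreover have "max k (Suc j) = k" using j(1) by simp
  ultimately show ?thesis by simp
qed

lemma mem_leftover_fun_upd:
  "j < k \<Longrightarrow> v \<in> leftover k (f(j := c)) \<longleftrightarrow>
    v < n \<and> v \<notin> c ` {..<l} \<and> (\<forall>j'<k. j' \<noteq> j \<longrightarrow> v \<notin> f j' ` {..<l})"
  unfolding leftover_def by (auto split: if_splits)

lemma leftover_replace:
  assumes f: "cycle_packing n E l k f" and j: "j < k" "i < l"
    and c: "c 0 = f j i" "c ` {1..<l} \<subseteq> leftover k f"
  shows "(leftover k f - c ` {1..<l}) \<union> (f j ` {..<l} - {f j i}) \<subseteq> leftover k (f(j := c))"
proof
  fix v assume v: "v \<in> (leftover k f - c ` {1..<l}) \<union> (f j ` {..<l} - {f j i})"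
  have c_image: "c ` {..<l} = insert (f j i) (c ` {1..<l})"
    using image_lessThan_eq_insert[of l c] c(1) l_ge_3 by simp
  have fj_notin: "f j i' \<notin> leftover k f" if "i' < l" for i'
    using leftover_disjoint[OF j(1), of f] that by blast
  from v consider "v \<in> leftover k f" "v \<notin> c ` {1..<l}" | "v \<in> f j ` {..<l}" "v \<noteq> f j i"
    by blast
  then show "v \<in> leftover k (f(j := c))"
  proof cases
    case 1
    then have "v \<notin> c ` {..<l}" using c_image fj_notin[OF j(2)] by auto
    moreover have "v \<notin> f j' ` {..<l}" if "j' < k" for j'
      using 1(1) leftover_disjoint[OF that, of f] by blast
    moreover have "v < n" using 1(1) leftover_subset[of k f] by blast
    ultimately show ?thesis by (simp add: mem_leftover_fun_upd[OF j(1)])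
  next
    case 2
    then obtain i' where i': "i' < l" "v = f j i'" by blast
    have "f j i' \<notin> c ` {1..<l}" using c(2) fj_notin[OF i'(1)] by blast
    then have "v \<notin> c ` {1..<l}" using i'(2) by simp
    then have "v \<notin> c ` {..<l}" using c_image 2(2) by simp
    moreover have "v \<notin> f j' ` {..<l}" if "j' < k" "j' \<noteq> j" for j'
    proof
      assume "v \<in> f j' ` {..<l}"
      then obtain i'' where i'': "i'' < l" "v = f j' i''" by blast
      then have "f j i' = f j' i''" using i'(2) by simp
      then show False using cycle_packing_injD[OF f j(1) i'(1) that(1) i''(1)] that(2) by simp
    qed
    moreover have "f j i' < n" using f j(1) i'(1) by (simp add: cycle_packing_def)
    ultimately show ?thesis using i'(2) by (simp add: mem_leftover_fun_upd[OF j(1)])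
  qed
qed

lemma neighbours_in_packing_gt:
  assumes a: "a \<in> leftover k f" and poor: "real (card (neighbours G a \<inter> leftover k f)) < \<epsilon> / 2 * real n"
  shows "(\<delta> + \<epsilon> / 2) * real n < real (card (neighbours G a \<inter> (\<Union>j<k. f j ` {..<l})))"
proof -
  let ?R = "leftover k f" and ?U = "\<Union>j<k. f j ` {..<l}"
  have "neighbours G a \<subseteq> (neighbours G a \<inter> ?R) \<union> (neighbours G a \<inter> ?U)"
    using neighbours_subset[OF G_pairs] by (auto simp: leftover_def)
  moreover have "finite ?R" "finite ?U" by (simp_all add: leftover_def)
  ultimately have "card (neighbours G a) \<le> card ((neighbours G a \<inter> ?R) \<union> (neighbours G a \<inter> ?U))"
    by (intro card_mono) auto
  also have "\<dots> \<le> card (neighbours G a \<inter> ?R) + card (neighbours G a \<inter> ?U)" by (rule card_Un_le)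
  finally have "card (neighbours G a) \<le> card (neighbours G a \<inter> ?R) + card (neighbours G a \<inter> ?U)" .
  then have "real (card (neighbours G a)) \<le> real (card (neighbours G a \<inter> ?R)) + real (card (neighbours G a \<inter> ?U))"
    by (simp only: of_nat_add[symmetric] of_nat_le_iff)
  moreover have "(\<delta> + \<epsilon>) * real n \<le> real (card (neighbours G a))"
    using degree_G a leftover_subset by auto
  moreover have "(\<delta> + \<epsilon>) * real n = (\<delta> + \<epsilon> / 2) * real n + \<epsilon> / 2 * real n"
    by (simp add: algebra_simps)
  ultimately show ?thesis using poor by linarith
qed

lemma rich_vertices_on_some_cycle:
  assumes f: "cycle_packing n E l k f" and k: "real k < \<delta> * real n"
    and poor: "\<forall>a\<in>leftover k f. real (card (neighbours G a \<inter> leftover k f)) < \<epsilon> / 2 * real n"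
  shows "\<exists>j<k. \<exists>i1<l. \<exists>i2<l. i1 \<noteq> i2 \<and> (\<forall>i\<in>{i1, i2}.
    \<epsilon> / (2 * \<delta> * real l) * real (card (leftover k f)) \<le> real (card (neighbours G (f j i) \<inter> leftover k f)))"
proof (rule ccontr)
  define R where "R = leftover k f"
  define U where "U = (\<Union>j<k. f j ` {..<l})"
  \<comment> \<open>\<eta> is chosen so that \<delta> n (1 + l \<eta>) = (\<delta> + \<epsilon> / 2) n.\<close>
  define \<eta> where "\<eta> = \<epsilon> / (2 * \<delta> * real l)"
  define d where "d u = real (card (neighbours G u \<inter> R))" for u
  assume "\<not> ?thesis"
  then have at_most_one_rich: "\<forall>i1<l. \<forall>i2<l. \<eta> * card R \<le> d (f j i1) \<and> \<eta> * card R \<le> d (f j i2) \<longrightarrow> i1 = i2"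
    if "j < k" for j
    using that unfolding d_def \<eta>_def R_def by blast
  have finR: "finite R" and finU: "finite U" by (simp_all add: R_def leftover_def U_def)
  have "0 < \<eta>" using \<delta>_pos \<epsilon>_pos l_ge_3 by (simp add: \<eta>_def)
  have cycle_sum: "(\<Sum>i<l. d (f j i)) \<le> real (card R) + real l * (\<eta> * real (card R))" if "j < k" for j
    using sum_le_if_at_most_one_large[of "{..<l}" "\<lambda>i. d (f j i)" "real (card R)" "\<eta> * card R"]
      at_most_one_rich[OF that] \<open>0 < \<eta>\<close> finR by (simp add: d_def card_mono)
  have "0 \<le> (1 - real l * \<delta>) * real n" using l_\<delta> by simp
  then have "R \<noteq> {}"
    using card_leftover_gt[OF f k] by (auto simp: R_def)
  then have "real (card R) * ((\<delta> + \<epsilon> / 2) * real n) < (\<Sum>a\<in>R. real (card (neighbours G a \<inter> U)))"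
    using sum_strict_mono[OF finR _ neighbours_in_packing_gt] poor by (simp add: R_def U_def)
  also have "\<dots> = (\<Sum>u\<in>U. d u)"
    using sum_card_neighbours_Int_swap[OF finR finU, of G] unfolding d_def by (metis of_nat_sum)
  also have "\<dots> = (\<Sum>j<k. \<Sum>i<l. d (f j i))"
    unfolding U_def by (rule sum_cycle_packing_vertices[OF f])
  also have "\<dots> \<le> (\<Sum>j<k. real (card R) + real l * (\<eta> * real (card R)))"
    by (rule sum_mono) (use cycle_sum in simp)
  also have "\<dots> = real k * (real (card R) * (1 + real l * \<eta>))"
    by (simp add: algebra_simps)
  also have "\<dots> \<le> \<delta> * real n * (real (card R) * (1 + real l * \<eta>))"
    using k \<open>0 < \<eta>\<close> by (intro mult_right_mono) auto
  also have "\<dots> = real (card R) * ((\<delta> + \<epsilon> / 2) * real n)"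
    using \<delta>_pos l_ge_3 unfolding \<eta>_def by (simp add: field_simps)
  finally show False by simp
qed

end

locale dense_plus_expander = dense_graph +
  fixes H :: "nat set set"
  assumes H_expanding: "expanding n H b"
begin

lemma cycle_packing_extend_at_leftover:
  assumes f: "cycle_packing n (G \<union> H) l k f" and k: "real k < \<delta> * real n"
    and h: "h \<in> leftover k f" and rich: "\<epsilon> / 2 * real n \<le> real (card (neighbours G h \<inter> leftover k f))"
  shows "\<exists>f'. cycle_packing n (G \<union> H) l (Suc k) f'"
proof -
  define W where "W = leftover k f - {h}"
  have "h \<notin> neighbours G h" by (simp add: neighbours_def)
  then have "neighbours G h \<inter> W = neighbours G h \<inter> leftover k f" by (auto simp: W_def)
  then have "real (2 * (l - 1) * b) \<le> real (card (neighbours G h \<inter> W))"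
    using rich room_nbrs by simp
  then have nbrs: "2 * (l - 1) * b \<le> card (neighbours G h \<inter> W)" by (simp only: of_nat_le_iff)
  have "finite (leftover k f)" using leftover_subset by (rule finite_subset) simp
  then have "card W = card (leftover k f) - 1"
    using h by (simp add: W_def card_Diff_singleton)
  then have room: "(l - 1) * (l - 1) * b \<le> card W"
    using leftover_large[OF f k] by simp
  have "W \<subseteq> {..<n}" "h \<notin> W" using leftover_subset by (auto simp: W_def)
  then obtain c where c: "c 0 = h" "c ` {1..<l} \<subseteq> W" "inj_on c {..<l}"
      "\<forall>i<l. {c i, c ((i + 1) mod l)} \<in> G \<union> H"
    using expanding_cycle_through[OF l_ge_3 H_expanding b_pos _ _ nbrs room] by blast
  have "c ` {..<l} = insert h (c ` {1..<l})"
    using image_lessThan_eq_insert[of l c] c(1) l_ge_3 by simp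
  then have "c ` {..<l} \<subseteq> leftover k f"
    using h c(2) by (auto simp: W_def)
  then show ?thesis using cycle_packing_append[OF f _ c(3,4)] by blast
qed

lemma cycle_packing_extend_by_switching:
  assumes f: "cycle_packing n (G \<union> H) l k f" and k: "real k < \<delta> * real n"
    and j: "j < k" and i: "i1 < l" "i2 < l" "i1 \<noteq> i2"
    and rich: "\<forall>i\<in>{i1, i2}. 2 * (l - 1) * b + l \<le> card (neighbours G (f j i) \<inter> leftover k f)"
  shows "\<exists>f'. cycle_packing n (G \<union> H) l (Suc k) f'"
proof -
  let ?R = "leftover k f"
  have R_large: "(l - 1) * (l - 1) * b + l < card ?R" by (rule leftover_large[OF f k])
  have finR: "finite ?R" using leftover_subset by (rule finite_subset) simp
  have f_notin_R: "f j i \<notin> ?R" if "i < l" for i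
    using leftover_disjoint[OF j, of f] that by blast
  have "f j i1 \<noteq> f j i2" using cycle_packing_injD[OF f j i(1) j i(2)] i(3) by blast
  have nbrs1: "2 * (l - 1) * b \<le> card (neighbours G (f j i1) \<inter> ?R)" using rich by simp
  have room1: "(l - 1) * (l - 1) * b \<le> card ?R" using R_large by simp
  obtain c1 where c1: "c1 0 = f j i1" "c1 ` {1..<l} \<subseteq> ?R" "inj_on c1 {..<l}"
      "\<forall>i<l. {c1 i, c1 ((i + 1) mod l)} \<in> G \<union> H"
    using expanding_cycle_through[OF l_ge_3 H_expanding b_pos leftover_subset f_notin_R[OF i(1)] nbrs1 room1]
    by blast
  have f1: "cycle_packing n (G \<union> H) l k (f(j := c1))"
    by (rule cycle_packing_replace[OF f j i(1) c1])
  define W where "W = ?R - c1 ` {1..<l}"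
  have "card (c1 ` {1..<l} \<inter> ?R) \<le> card (c1 ` {1..<l})" by (intro card_mono) auto
  also have "\<dots> \<le> card {1..<l}" by (rule card_image_le) simp
  finally have c1_small: "card (c1 ` {1..<l} \<inter> ?R) \<le> l" by simp
  have "card (neighbours G (f j i2) \<inter> ?R) \<le> card (neighbours G (f j i2) \<inter> W) + card (c1 ` {1..<l} \<inter> ?R)"
    unfolding W_def by (rule card_Int_le_Diff_add[OF finR])
  then have nbrs2: "2 * (l - 1) * b \<le> card (neighbours G (f j i2) \<inter> W)"
    using rich c1_small by simp
  have "card (UNIV \<inter> ?R) \<le> card (UNIV \<inter> W) + card (c1 ` {1..<l} \<inter> ?R)"
    unfolding W_def by (rule card_Int_le_Diff_add[OF finR])
  then have room2: "(l - 1) * (l - 1) * b \<le> card W"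
    using R_large c1_small by simp
  have W_n: "W \<subseteq> {..<n}" and h2_W: "f j i2 \<notin> W"
    using leftover_subset[of k f] f_notin_R[OF i(2)] by (auto simp: W_def)
  obtain c2 where c2: "c2 0 = f j i2" "c2 ` {1..<l} \<subseteq> W" "inj_on c2 {..<l}"
      "\<forall>i<l. {c2 i, c2 ((i + 1) mod l)} \<in> G \<union> H"
    using expanding_cycle_through[OF l_ge_3 H_expanding b_pos W_n h2_W nbrs2 room2] by blast
  have "c2 ` {..<l} = insert (f j i2) (c2 ` {1..<l})"
    using image_lessThan_eq_insert[of l c2] c2(1) l_ge_3 by simp
  also have "\<dots> \<subseteq> W \<union> (f j ` {..<l} - {f j i1})"
    using c2(2) i(2) \<open>f j i1 \<noteq> f j i2\<close> by auto
  also have "\<dots> \<subseteq> leftover k (f(j := c1))"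
    unfolding W_def by (rule leftover_replace[OF f j i(1) c1(1,2)])
  finally show ?thesis using cycle_packing_append[OF f1 _ c2(3,4)] by blast
qed

lemma cycle_packing_extend:
  assumes f: "cycle_packing n (G \<union> H) l k f" and k: "real k < \<delta> * real n"
  shows "\<exists>f'. cycle_packing n (G \<union> H) l (Suc k) f'"
proof (cases "\<exists>h\<in>leftover k f. \<epsilon> / 2 * real n \<le> real (card (neighbours G h \<inter> leftover k f))")
  case True
  then show ?thesis using cycle_packing_extend_at_leftover[OF f k] by blast
next
  case False
  then obtain j i1 i2 where j: "j < k" "i1 < l" "i2 < l" "i1 \<noteq> i2"
    and rich: "\<forall>i\<in>{i1, i2}. \<epsilon> / (2 * \<delta> * real l) * real (card (leftover k f))
      \<le> real (card (neighbours G (f j i) \<inter> leftover k f))"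
    using rich_vertices_on_some_cycle[OF f k] by (auto simp: not_le)
  have "0 < \<epsilon> / (2 * \<delta> * real l)" using \<delta>_pos \<epsilon>_pos l_ge_3 by simp
  have "real (2 * (l - 1) * b + l) \<le> \<epsilon> / (2 * \<delta> * real l) * (1 - real l * \<delta>) * real n"
    by (rule room_rich)
  also have "\<dots> = \<epsilon> / (2 * \<delta> * real l) * ((1 - real l * \<delta>) * real n)" by (simp only: mult.assoc)
  also have "\<dots> \<le> \<epsilon> / (2 * \<delta> * real l) * real (card (leftover k f))"
    using card_leftover_gt[OF f k] \<open>0 < \<epsilon> / (2 * \<delta> * real l)\<close> by (intro mult_left_mono) auto
  finally have bound: "real (2 * (l - 1) * b + l) \<le> \<epsilon> / (2 * \<delta> * real l) * real (card (leftover k f))" .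
  have "2 * (l - 1) * b + l \<le> card (neighbours G (f j i) \<inter> leftover k f)" if "i \<in> {i1, i2}" for i
    using order_trans[OF bound rich[rule_format, OF that]] by (simp only: of_nat_le_iff)
  then show ?thesis using cycle_packing_extend_by_switching[OF f k j] by blast
qed

lemma many_disjoint_cycles: "\<exists>k. \<delta> * real n \<le> real k \<and> has_disjoint_cycles n (G \<union> H) l k"
proof -
  have packing: "\<exists>f. cycle_packing n (G \<union> H) l k f" if "real k < \<delta> * real n + 1" for k
    using that
  proof (induction k)
    case 0
    then show ?case using cycle_packing_0 by blast
  next
    case (Suc k)
    then have "real k < \<delta> * real n" by simp
    moreover obtain f where "cycle_packing n (G \<union> H) l k f" using Suc by fastforce
    ultimately show ?case using cycle_packing_extend by blast
  qed
  define k where "k = nat \<lceil>\<delta> * real n\<rceil>"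
  have "\<delta> * real n \<le> real k" unfolding k_def by linarith
  moreover have "real k < \<delta> * real n + 1" unfolding k_def using \<delta>_pos by (simp add: of_nat_nat) linarith
  ultimately show ?thesis using packing has_disjoint_cycles_iff_cycle_packing by blast
qed

end

context dense_graph
begin

lemma gnp_prob_many_disjoint_cycles_ge:
  assumes "0 \<le> p" "p \<le> 1" "4 * real n \<le> p * real (b * b)"
  shows "1 - (4 * exp (-4)) ^ n
    \<le> gnp_prob n p (\<lambda>H. \<exists>k. \<delta> * real n \<le> real k \<and> has_disjoint_cycles n (G \<union> H) l k)"
proof -
  have "\<exists>k. \<delta> * real n \<le> real k \<and> has_disjoint_cycles n (G \<union> H) l k" if "expanding n H b" for H
    by (rule dense_plus_expander.many_disjoint_cycles[OF
          dense_plus_expander.intro[OF dense_graph_axioms dense_plus_expander_axioms.intro[OF that]]])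
  then have "gnp_prob n p (\<lambda>H. expanding n H b)
      \<le> gnp_prob n p (\<lambda>H. \<exists>k. \<delta> * real n \<le> real k \<and> has_disjoint_cycles n (G \<union> H) l k)"
    by (intro gnp_prob_mono[OF assms(1,2)])
  then show ?thesis using gnp_prob_expanding_ge[OF assms] by linarith
qed

end

lemma eventually_room:
  fixes \<mu> :: real and L l :: nat
  assumes \<mu>: "0 < \<mu>" and L: "1 \<le> L"
  shows "\<forall>\<^sub>F n in sequentially. \<forall>b. real b \<le> \<mu> / (4 * real L ^ 2) * real n + 1 \<longrightarrow>
    real (2 * L * b + l) \<le> \<mu> * real n \<and> real (L * L * b + l) \<le> \<mu> * real n"
proof -
  obtain N :: nat where N: "2 * (real L ^ 2 + 2 * real L + real l) / \<mu> \<le> real N"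
    using real_arch_simple by blast
  show ?thesis
    unfolding eventually_sequentially
  proof (intro exI allI impI)
    fix n b assume "N \<le> n" and b: "real b \<le> \<mu> / (4 * real L ^ 2) * real n + 1"
    have "2 * (real L ^ 2 + 2 * real L + real l) / \<mu> \<le> real n" using N \<open>N \<le> n\<close> by linarith
    then have slack: "real L ^ 2 + 2 * real L + real l \<le> \<mu> * real n / 2"
      using \<mu> by (simp add: field_simps)
    have "real L ^ 2 * real b \<le> real L ^ 2 * (\<mu> / (4 * real L ^ 2) * real n + 1)"
      using b by (intro mult_left_mono) auto
    also have "\<dots> = \<mu> * real n / 4 + real L ^ 2" using L by (simp add: field_simps)
    finally have LLb: "real L ^ 2 * real b \<le> \<mu> * real n / 4 + real L ^ 2" .
    have "real L * real b \<le> real L * (\<mu> / (4 * real L ^ 2) * real n + 1)"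
      using b by (intro mult_left_mono) auto
    also have "\<dots> = \<mu> * real n / (4 * real L) + real L" using L by (simp add: field_simps power2_eq_square)
    also have "\<dots> \<le> \<mu> * real n / 4 + real L"
      using L \<mu> by (intro add_right_mono divide_left_mono) auto
    finally have Lb: "real L * real b \<le> \<mu> * real n / 4 + real L" .
    have "0 \<le> \<mu> * real n" "0 \<le> real L ^ 2" using \<mu> by simp_all
    have "real (2 * L * b + l) = 2 * (real L * real b) + real l" by simp
    also have "\<dots> \<le> \<mu> * real n" using Lb slack \<open>0 \<le> real L ^ 2\<close> by linarith
    finally have "real (2 * L * b + l) \<le> \<mu> * real n" .
    moreover have "real (L * L * b + l) = real L ^ 2 * real b + real l" by (simp add: power2_eq_square)
    ultimately show "real (2 * L * b + l) \<le> \<mu> * real n \<and> real (L * L * b + l) \<le> \<mu> * real n"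
      using LLb slack \<open>0 \<le> \<mu> * real n\<close> by linarith
  qed
qed

lemma eventually_room_for_cycles:
  fixes \<delta> \<epsilon> :: real
  assumes l: "3 \<le> l" and \<delta>: "0 < \<delta>" and \<epsilon>: "0 < \<epsilon>" and l_\<delta>: "real l * \<delta> < 1"
  obtains \<beta> :: real where "0 < \<beta>"
    and "\<forall>\<^sub>F n in sequentially. \<forall>b. real b \<le> \<beta> * real n + 1 \<longrightarrow> room_for_cycles l \<delta> \<epsilon> n b"
proof -
  define \<mu> where "\<mu> = min (min (\<epsilon> / 2) (\<epsilon> / (2 * \<delta> * real l) * (1 - real l * \<delta>))) (1 - real l * \<delta>)"
  have "0 < \<mu>" using l \<delta> \<epsilon> l_\<delta> by (simp add: \<mu>_def)
  have "\<mu> \<le> \<epsilon> / 2" "\<mu> \<le> \<epsilon> / (2 * \<delta> * real l) * (1 - real l * \<delta>)" "\<mu> \<le> 1 - real l * \<delta>"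
    unfolding \<mu>_def by linarith+
  then have \<mu>_le: "\<mu> * real n \<le> \<epsilon> / 2 * real n"
    "\<mu> * real n \<le> \<epsilon> / (2 * \<delta> * real l) * (1 - real l * \<delta>) * real n"
    "\<mu> * real n \<le> (1 - real l * \<delta>) * real n" for n
    by (meson mult_right_mono of_nat_0_le_iff)+
  have "\<forall>\<^sub>F n in sequentially. \<forall>b. real b \<le> \<mu> / (4 * real (l - 1) ^ 2) * real n + 1 \<longrightarrow>
    real (2 * (l - 1) * b + l) \<le> \<mu> * real n \<and> real ((l - 1) * (l - 1) * b + l) \<le> \<mu> * real n"
    using eventually_room[OF \<open>0 < \<mu>\<close>, of "l - 1" l] l by simp
  then have "\<forall>\<^sub>F n in sequentially. \<forall>b. real b \<le> \<mu> / (4 * real (l - 1) ^ 2) * real n + 1 \<longrightarrow>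
    room_for_cycles l \<delta> \<epsilon> n b"
    unfolding room_for_cycles_def by eventually_elim (use \<mu>_le in \<open>meson order_trans\<close>)
  moreover have "0 < \<mu> / (4 * real (l - 1) ^ 2)" using \<open>0 < \<mu>\<close> l by simp
  ultimately show ?thesis using that by blast
qed

lemma four_n_le_p_times_b_squared:
  fixes \<beta> p :: real
  assumes "0 < \<beta>" "\<beta> * real n \<le> real b" "0 \<le> p" "4 / \<beta>\<^sup>2 / real n \<le> p"
  shows "4 * real n \<le> p * real (b * b)"
proof (cases "n = 0")
  case False
  have "(\<beta> * real n)\<^sup>2 \<le> (real b)\<^sup>2" using assms(1,2) by (intro power_mono) auto
  have "4 * real n = 4 / \<beta>\<^sup>2 / real n * (\<beta> * real n)\<^sup>2"
    using False \<open>0 < \<beta>\<close> by (simp add: field_simps power2_eq_square)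
  also have "\<dots> \<le> p * (real b)\<^sup>2"
    using assms(3,4) \<open>(\<beta> * real n)\<^sup>2 \<le> (real b)\<^sup>2\<close> by (intro mult_mono) auto
  finally show ?thesis by (simp add: power2_eq_square)
qed (use assms(3) in simp)

lemma gnp_prob_many_disjoint_cycles_ge_min_degree:
  fixes \<delta> \<epsilon> \<beta> p :: real
  assumes l: "3 \<le> l" and \<delta>: "0 < \<delta>" and \<epsilon>: "0 < \<epsilon>" and l_\<delta>: "real l * \<delta> < 1"
    and G: "G \<subseteq> all_pairs n" and degree: "(\<delta> + \<epsilon>) * real n \<le> real (min_degree n G)"
    and p: "0 \<le> p" "p \<le> 1" "4 / \<beta>\<^sup>2 / real n \<le> p" and "0 < \<beta>"
    and room: "\<forall>b. real b \<le> \<beta> * real n + 1 \<longrightarrow> room_for_cycles l \<delta> \<epsilon> n b"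
  shows "1 - (4 * exp (-4)) ^ n
    \<le> gnp_prob n p (\<lambda>H. \<exists>k. \<delta> * real n \<le> real k \<and> has_disjoint_cycles n (G \<union> H) l k)"
proof -
  define b where "b = nat \<lfloor>\<beta> * real n\<rfloor> + 1"
  have "0 \<le> \<beta> * real n" using \<open>0 < \<beta>\<close> by simp
  then have b: "\<beta> * real n \<le> real b" "real b \<le> \<beta> * real n + 1" "1 \<le> b"
    unfolding b_def by linarith+
  have "\<forall>a<n. (\<delta> + \<epsilon>) * real n \<le> real (card (neighbours G a))"
    using degree min_degree_le_card_neighbours[of _ n G] by (meson of_nat_le_iff order_trans)
  then have "dense_graph n G l b \<delta> \<epsilon>"
    using l \<delta> \<epsilon> l_\<delta> G b(3) room[rule_format, OF b(2)] by unfold_locales auto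
  then show ?thesis
    using dense_graph.gnp_prob_many_disjoint_cycles_ge p(1,2)
      four_n_le_p_times_b_squared[OF \<open>0 < \<beta>\<close> b(1) p(1,3)] by blast
qed

theorem corollary1p7:
  fixes l :: nat and \<epsilon> \<delta> :: real
  assumes "l \<ge> 3" and "\<epsilon> > 0" and "0 < \<delta>" and "\<delta> < 1 / real l"
  shows "\<exists>C>0. \<forall>(Gs :: nat \<Rightarrow> nat set set) (ps :: nat \<Rightarrow> real).
           (\<forall>n. Gs n \<subseteq> all_pairs n) \<and>
           (\<forall>\<^sub>F n in sequentially. real (min_degree n (Gs n)) \<ge> (\<delta> + \<epsilon>) * real n) \<and>
           (\<forall>n. 0 \<le> ps n \<and> ps n \<le> 1) \<and>
           (\<forall>\<^sub>F n in sequentially. ps n \<ge> C / real n)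
           \<longrightarrow> (\<lambda>n. gnp_prob n (ps n)
                   (\<lambda>H. \<exists>k. real k \<ge> \<delta> * real n \<and> has_disjoint_cycles n (Gs n \<union> H) l k))
               \<longlonglongrightarrow> 1"
proof -
  have l_\<delta>: "real l * \<delta> < 1" using assms(1,4) by (simp add: field_simps)
  obtain \<beta> :: real where "0 < \<beta>"
    and room: "\<forall>\<^sub>F n in sequentially. \<forall>b. real b \<le> \<beta> * real n + 1 \<longrightarrow> room_for_cycles l \<delta> \<epsilon> n b"
    using eventually_room_for_cycles[OF assms(1) assms(3) assms(2) l_\<delta>] by blast
  show ?thesis
  proof (intro exI[of _ "4 / \<beta>\<^sup>2"] conjI allI impI)
    fix Gs :: "nat \<Rightarrow> nat set set" and ps :: "nat \<Rightarrow> real"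
    assume "(\<forall>n. Gs n \<subseteq> all_pairs n) \<and>
      (\<forall>\<^sub>F n in sequentially. real (min_degree n (Gs n)) \<ge> (\<delta> + \<epsilon>) * real n) \<and>
      (\<forall>n. 0 \<le> ps n \<and> ps n \<le> 1) \<and> (\<forall>\<^sub>F n in sequentially. ps n \<ge> 4 / \<beta>\<^sup>2 / real n)"
    then have Gs: "\<forall>n. Gs n \<subseteq> all_pairs n" and ps: "\<forall>n. 0 \<le> ps n \<and> ps n \<le> 1"
      and dense_and_p_large: "\<forall>\<^sub>F n in sequentially.
        (\<delta> + \<epsilon>) * real n \<le> real (min_degree n (Gs n)) \<and> 4 / \<beta>\<^sup>2 / real n \<le> ps n"
      by (auto intro: eventually_conj)
    have "\<forall>\<^sub>F n in sequentially. 1 - (4 * exp (-4)) ^ n \<le> gnp_prob n (ps n)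
        (\<lambda>H. \<exists>k. \<delta> * real n \<le> real k \<and> has_disjoint_cycles n (Gs n \<union> H) l k)"
      using dense_and_p_large room by eventually_elim
        (use assms l_\<delta> Gs ps \<open>0 < \<beta>\<close> in \<open>blast intro: gnp_prob_many_disjoint_cycles_ge_min_degree\<close>)
    then show "(\<lambda>n. gnp_prob n (ps n)
        (\<lambda>H. \<exists>k. \<delta> * real n \<le> real k \<and> has_disjoint_cycles n (Gs n \<union> H) l k)) \<longlonglongrightarrow> 1"
      by (rule tendsto_sandwich[OF _ _ LIMSEQ_1_minus_power_4_exp tendsto_const])
        (use ps gnp_prob_le_1 in auto)
  qed (use \<open>0 < \<beta>\<close> in simp)
qed

end
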